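(* Let $\omega\in S_n$ and $1\le i<j\le n$ with $c_i(\omega),c_j(\omega)>0$. If $m_{i,p}(\omega)>m_{j,q}(\omega)$ for some $p\in[c_i(\omega)]$ and $q\in[c_j(\omega)]$, then $\{k: j<k\le n,\ \omega(i)>\omega(k)\}\subseteq\{l: j<l\le n,\ \omega(j)>\omega(l)\}$.
   Context: Permutations $\omega\in S_n$ are written in one-line notation. Let ${\rm Inv}(\omega)=\{(i,j): 1\le i<j\le n,\ \omega(i)>\omega(j)\}$, $c_i(\omega)=\#\{j: i<j\le n,\ \omega(i)>\omega(j)\}$, and for $i<j$, $c_{i,j}(\omega)=\#\{k: i<k<j,\ \omega(i)>\omega(k)\}$; $[m]=\{1,\dots,m\}$. For $i$ with $c_i(\omega)>0$ and $x\in[c_i(\omega)]$, $m_{i,x}(\omega)\in\mathbb{N}^n$ has $j$-th coordinate $0$ if $j<i$; $x$ if $j=i$; $0$ if $j>i$ and $(i,j)\in{\rm Inv}(\omega)$; $\max\{0,x-c_{i,j}(\omega)\}$ if $j>i$ and $(i,j)\notin{\rm Inv}(\omega)$. Comparisons are strict comparisons in the product order on $\mathbb{N}^n$. *)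

theory Defs
  imports "HOL-Combinatorics.Permutations"
begin

text \<open>Permutations of [n] = {1..n} are functions w with w permutes {1..n};
  w i is the i-th entry of the one-line notation.
  Vectors in N^n are functions nat => nat, coordinates 1..n.\<close>

definition Inv :: "nat \<Rightarrow> (nat \<Rightarrow> nat) \<Rightarrow> (nat \<times> nat) set" where
  "Inv n w = {(i, j). 1 \<le> i \<and> i < j \<and> j \<le> n \<and> w i > w j}"

definition c :: "nat \<Rightarrow> (nat \<Rightarrow> nat) \<Rightarrow> nat \<Rightarrow> nat" where
  "c n w i = card {j. i < j \<and> j \<le> n \<and> w i > w j}"

definition cij :: "(nat \<Rightarrow> nat) \<Rightarrow> nat \<Rightarrow> nat \<Rightarrow> nat" where
  "cij w i j = card {k. i < k \<and> k < j \<and> w i > w k}"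

definition mvec :: "nat \<Rightarrow> (nat \<Rightarrow> nat) \<Rightarrow> nat \<Rightarrow> nat \<Rightarrow> (nat \<Rightarrow> nat)" where
  "mvec n w i x = (\<lambda>j. if j < i then 0
                         else if j = i then x
                         else if (i, j) \<in> Inv n w then 0
                         else x - cij w i j)"

definition vless :: "nat \<Rightarrow> (nat \<Rightarrow> nat) \<Rightarrow> (nat \<Rightarrow> nat) \<Rightarrow> bool" where
  "vless n u v \<longleftrightarrow> (\<forall>k\<in>{1..n}. u k \<le> v k) \<and> (\<exists>k\<in>{1..n}. u k \<noteq> v k)"

end

theory Submission
  imports Defs
begin

(* Compare the two vectors m_{j,q} < m_{i,p} at the single
   coordinate j.  There m_{j,q} has the value q >= 1, while m_{i,p} vanishes
   at every coordinate j > i with (i,j) an inversion.  Hence (i,j) is not an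
   inversion, and since w is injective this means w(i) < w(j).  Every k > j
   with w(i) > w(k) then also satisfies w(j) > w(k), which is the claimed
   inclusion of the sets of "descents to the right of j". *)

lemma mvec_diagonal: "mvec n w i x i = x"
  by (simp add: mvec_def)

lemma mvec_at_inversion:
  assumes "(i, j) \<in> Inv n w" and "i < j"
  shows "mvec n w i x j = 0"
  using assms by (simp add: mvec_def)

lemma vless_coordinate_le:
  assumes "vless n u v" and "k \<in> {1..n}"
  shows "u k \<le> v k"
  using assms unfolding vless_def by blast

lemma mvec_le_at_j_imp_ascent:
  assumes inj: "inj w"
    and "1 \<le> i" "i < j" "j \<le> n" "0 < q"
    and le_j: "mvec n w j q j \<le> mvec n w i p j"
  shows "w i < w j"
proof -
  have not_inv: "(i, j) \<notin> Inv n w"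
  proof
    assume "(i, j) \<in> Inv n w"
    then have "mvec n w i p j = 0"
      using \<open>i < j\<close> by (rule mvec_at_inversion)
    with le_j \<open>0 < q\<close> show False
      by (simp add: mvec_diagonal)
  qed
  then have "\<not> w j < w i"
    using assms(2-4) by (simp add: Inv_def)
  moreover have "w i \<noteq> w j"
    using inj \<open>i < j\<close> by (metis inj_eq less_irrefl)
  ultimately show ?thesis
    by simp
qed

lemma ascent_descents_subset:
  fixes w :: "nat \<Rightarrow> nat"
  assumes "w i < w j"
  shows "{k. j < k \<and> k \<le> n \<and> w i > w k} \<subseteq> {l. j < l \<and> l \<le> n \<and> w j > w l}"
  using assms by auto

theorem mainTheorem4:
  fixes n :: nat and w :: "nat \<Rightarrow> nat" and i j p q :: nat
  assumes "w permutes {1..n}"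
    and "1 \<le> i" and "i < j" and "j \<le> n"
    and "c n w i > 0" and "c n w j > 0"
    and "p \<in> {1..c n w i}" and "q \<in> {1..c n w j}"
    and "vless n (mvec n w j q) (mvec n w i p)"
  shows "{k. j < k \<and> k \<le> n \<and> w i > w k} \<subseteq> {l. j < l \<and> l \<le> n \<and> w j > w l}"
proof -
  have "j \<in> {1..n}"
    using assms(2-4) by simp
  with assms(9) have "mvec n w j q j \<le> mvec n w i p j"
    by (rule vless_coordinate_le)
  moreover have "0 < q"
    using assms(8) by simp
  ultimately have "w i < w j"
    using mvec_le_at_j_imp_ascent permutes_inj[OF assms(1)] assms(2-4) by blast
  then show ?thesis
    by (rule ascent_descents_subset)
qed

end
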